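(* In a hierarchical tensor factorization with mode tree $\mathcal T$, for any $\nu\in\mathrm{int}(\mathcal T)$, $\nu_c\in C(\nu)$ and $r\in[R_\nu]$: (a) the end tensor obtained by replacing $W^{(\nu)}$ with the matrix whose $r$'th row is $W^{(\nu)}_{r,:}$ and whose other rows are zero (all other weight matrices unchanged) equals $\sigma_{\nu,r}\cdot\mathcal E_{\nu,r}$; and (b) the end tensor obtained by replacing $W^{(\nu_c)}$ with the matrix whose $r$'th column is $W^{(\nu_c)}_{:,r}$ and whose other columns are zero (all other weight matrices unchanged) equals $\sigma_{\nu,r}\cdot\mathcal E_{\nu,r}$.
   Context: Fix $N\in\mathbb N$, $D_1,\dots,D_N\in\mathbb N$; $[K]:=\{1,\dots,K\}$; norms are Frobenius norms; $\otimes$ the tensor product. A mode tree $\mathcal T$ over $[N]$ is a rooted tree whose nodes are labeled by subsets of $[N]$, with exactly $N$ leaves labeled $\{1\},\dots,\{N\}$, and where each interior node's label is the union of its children's labels; nodes are identified with labels, root $[N]$, $\mathrm{int}(\mathcal T)$ interior nodes, $Pa(\nu)$ parent, $C(\nu)$ children (fixed order). A hierarchical tensor factorization has $R_\nu\in\mathbb N$ ($\nu\in\mathrm{int}(\mathcal T)$), $R_{Pa([N])}:=1$, $R_{\{n\}}:=D_n$, weight matrices $W^{(\nu)}\in\mathbb R^{R_\nu\times R_{Pa(\nu)}}$. Intermediate tensors: $\mathcal W^{(\{n\},r)}:=W^{(\{n\})}_{:,r}$; for $\nu\in\mathrm{int}(\mathcal T)\setminus\{[N]\}$ (leaves to root),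 $r\in[R_{Pa(\nu)}]$: $\mathcal W^{(\nu,r)}:=\pi_\nu\big(\sum_{r'=1}^{R_\nu}W^{(\nu)}_{r',r}\bigotimes_{\nu_c\in C(\nu)}\mathcal W^{(\nu_c,r')}\big)$; end tensor $\mathcal W_H:=\pi_{[N]}\big(\sum_{r'=1}^{R_{[N]}}W^{([N])}_{r',1}\bigotimes_{\nu_c\in C([N])}\mathcal W^{(\nu_c,r')}\big)$, where $\pi_\nu$ permutes modes (ordered by children, each child's elements ascending) into ascending order of the elements of $\nu$. The norm of the $(\nu,r)$'th local component is $\sigma_{\nu,r}:=\|W^{(\nu)}_{r,:}\|\prod_{\nu_c\in C(\nu)}\|W^{(\nu_c)}_{:,r}\|$. $\mathcal E_{\nu,r}$ is the end tensor obtained from the same construction except that, for every $r'\in[R_{Pa(\nu)}]$, the tensor produced at node $\nu$ (the end tensor itself if $\nu=[N]$) is replaced by $\pi_\nu\big(\sigma_{\nu,r}^{-1}W^{(\nu)}_{r,r'}\bigotimes_{\nu_c\in C(\nu)}\mathcal W^{(\nu_c,r)}\big)$; $\mathcal E_{\nu,r}:=0$ if $\sigma_{\nu,r}=0$. *)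

theory Defs
  imports Complex_Main
begin

datatype mtree = Leaf nat | Node "mtree list"

fun lab :: "mtree \<Rightarrow> nat set" where
  "lab (Leaf n) = {n}"
| "lab (Node cs) = (\<Union>c\<in>set cs. lab c)"

fun subtrees :: "mtree \<Rightarrow> mtree set" where
  "subtrees (Leaf n) = {Leaf n}"
| "subtrees (Node cs) = insert (Node cs) (\<Union>c\<in>set cs. subtrees c)"

fun leaves :: "mtree \<Rightarrow> nat list" where
  "leaves (Leaf n) = [n]"
| "leaves (Node cs) = concat (map leaves cs)"

fun labels :: "mtree \<Rightarrow> nat set list" where
  "labels (Leaf n) = [{n}]"
| "labels (Node cs) = lab (Node cs) # concat (map labels cs)"

text \<open>A mode tree over [N]: leaves are exactly the modes 1..N, every node has
  a distinct label (so nodes can be identified with labels), and every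
  interior node has at least one child.\<close>
definition mode_tree :: "nat \<Rightarrow> mtree \<Rightarrow> bool" where
  "mode_tree N T \<longleftrightarrow> set (leaves T) = {1..N} \<and> distinct (labels T)
     \<and> (\<forall>cs. Node cs \<in> subtrees T \<longrightarrow> cs \<noteq> [])"

definition interior :: "mtree \<Rightarrow> nat set set" where
  "interior T = {lab (Node cs) | cs. Node cs \<in> subtrees T}"

definition kids :: "mtree \<Rightarrow> nat set \<Rightarrow> mtree list" where
  "kids T \<nu> = (THE cs. Node cs \<in> subtrees T \<and> lab (Node cs) = \<nu>)"

fun rank :: "(nat \<Rightarrow> nat) \<Rightarrow> (nat set \<Rightarrow> nat) \<Rightarrow> mtree \<Rightarrow> nat" where
  "rank D R (Leaf n) = D n"
| "rank D R (Node cs) = R (lab (Node cs))"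

definition parent_rank :: "(nat set \<Rightarrow> nat) \<Rightarrow> mtree \<Rightarrow> nat set \<Rightarrow> nat" where
  "parent_rank R T \<nu> = (if \<nu> = lab T then 1 else
     R (lab (THE p. p \<in> subtrees T \<and> (\<exists>cs. p = Node cs \<and> (\<exists>c\<in>set cs. lab c = \<nu>)))))"

text \<open>Weight matrices: W nu i j is the (i,j) entry of W^(nu) (0-based indices,
  so [K] is rendered as {0..<K}).  Tensors are functions from multi-indices
  (nat => nat, mode n |-> index in mode n) to reals; modes are addressed by
  their labels, so the permutations pi_nu are implicit.\<close>

fun tens :: "(nat set \<Rightarrow> nat) \<Rightarrow> (nat set \<Rightarrow> nat \<Rightarrow> nat \<Rightarrow> real) \<Rightarrow> mtree
              \<Rightarrow> nat \<Rightarrow> (nat \<Rightarrow> nat) \<Rightarrow> real" where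
  "tens R W (Leaf n) r idx = W {n} (idx n) r"
| "tens R W (Node cs) r idx =
     (\<Sum>r'<R (lab (Node cs)). W (lab (Node cs)) r' r * prod_list (map (\<lambda>c. tens R W c r' idx) cs))"

fun tens_rep :: "(nat set \<Rightarrow> nat) \<Rightarrow> (nat set \<Rightarrow> nat \<Rightarrow> nat \<Rightarrow> real) \<Rightarrow> nat set
              \<Rightarrow> (nat \<Rightarrow> (nat \<Rightarrow> nat) \<Rightarrow> real) \<Rightarrow> mtree
              \<Rightarrow> nat \<Rightarrow> (nat \<Rightarrow> nat) \<Rightarrow> real" where
  "tens_rep R W \<nu> g (Leaf n) r idx = W {n} (idx n) r"
| "tens_rep R W \<nu> g (Node cs) r idx =
     (if lab (Node cs) = \<nu> then g r idx else
     (\<Sum>r'<R (lab (Node cs)). W (lab (Node cs)) r' r * prod_list (map (\<lambda>c. tens_rep R W \<nu> g c r' idx) cs)))"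

definition end_tensor :: "mtree \<Rightarrow> (nat set \<Rightarrow> nat) \<Rightarrow> (nat set \<Rightarrow> nat \<Rightarrow> nat \<Rightarrow> real)
                          \<Rightarrow> (nat \<Rightarrow> nat) \<Rightarrow> real" where
  "end_tensor T R W = tens R W T 0"

definition sigma :: "mtree \<Rightarrow> (nat \<Rightarrow> nat) \<Rightarrow> (nat set \<Rightarrow> nat) \<Rightarrow> (nat set \<Rightarrow> nat \<Rightarrow> nat \<Rightarrow> real)
                     \<Rightarrow> nat set \<Rightarrow> nat \<Rightarrow> real" where
  "sigma T D R W \<nu> r =
     sqrt (\<Sum>r'<parent_rank R T \<nu>. (W \<nu> r r')\<^sup>2) *
     prod_list (map (\<lambda>c. sqrt (\<Sum>i<rank D R c. (W (lab c) i r)\<^sup>2)) (kids T \<nu>))"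

definition local_comp :: "mtree \<Rightarrow> (nat \<Rightarrow> nat) \<Rightarrow> (nat set \<Rightarrow> nat) \<Rightarrow> (nat set \<Rightarrow> nat \<Rightarrow> nat \<Rightarrow> real)
                     \<Rightarrow> nat set \<Rightarrow> nat \<Rightarrow> (nat \<Rightarrow> nat) \<Rightarrow> real" where
  "local_comp T D R W \<nu> r =
     (if sigma T D R W \<nu> r = 0 then (\<lambda>idx. 0)
      else tens_rep R W \<nu>
             (\<lambda>r' idx. (1 / sigma T D R W \<nu> r) * W \<nu> r r' *
                prod_list (map (\<lambda>c. tens R W c r idx) (kids T \<nu>)))
             T 0)"

end

theory Submission
  imports Defs
begin

(* Since labels are distinct, the node \<nu> occurs exactly once in T, so the end tensor is the
   construction tens_rep in which the tensor produced at \<nu> is a black box g.  Keeping only the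
   r-th row of W^(\<nu>), or only the r-th column of a child's weight matrix, changes weights inside
   the subtree at \<nu> only, and in both cases turns g into the local component
   g r' = W^(\<nu>)_{r,r'} * prod_c W^(c,r).
   Plugging in is homogeneous in g because on each level exactly one child contains \<nu>; this gives
   sigma * E = tens_rep g when sigma is nonzero.  When sigma = 0, g vanishes at every index below
   R_{Pa(\<nu>)}, the only indices the construction reads, so both sides are 0. *)

declare lab.simps(2) [simp del]

lemma subtrees_refl [simp]: "t \<in> subtrees t"
  by (cases t) auto

lemma subtrees_trans: "s \<in> subtrees t \<Longrightarrow> u \<in> subtrees s \<Longrightarrow> u \<in> subtrees t"
  by (induction t arbitrary: s) auto

lemma child_in_subtrees_Node: "c \<in> set cs \<Longrightarrow> c \<in> subtrees (Node cs)"
  by (auto intro: bexI[where x = c])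

lemma child_in_subtrees: "c \<in> set cs \<Longrightarrow> Node cs \<in> subtrees t \<Longrightarrow> c \<in> subtrees t"
  using subtrees_trans child_in_subtrees_Node by blast

lemma size_child_less: "c \<in> set cs \<Longrightarrow> size c < size (Node cs)"
  by (induction cs) auto

lemma size_subtree_le: "s \<in> subtrees t \<Longrightarrow> size s \<le> size t"
proof (induction t arbitrary: s)
  case (Node cs)
  then show ?case using size_child_less by fastforce
qed auto

lemma Node_notin_subtrees_child: "c \<in> set cs \<Longrightarrow> Node cs \<notin> subtrees c"
  using size_subtree_le size_child_less by fastforce

lemma leaf_in_leaves: "Leaf n \<in> subtrees t \<Longrightarrow> n \<in> set (leaves t)"
  by (induction t) auto

lemma set_labels: "set (labels t) = lab ` subtrees t"
  by (induction t) auto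

lemma lab_in_labels [simp]: "lab t \<in> set (labels t)"
  by (cases t) auto

lemma distinct_labels_subtree: "distinct (labels t) \<Longrightarrow> s \<in> subtrees t \<Longrightarrow> distinct (labels s)"
  by (induction t arbitrary: s) (auto simp: distinct_concat_iff)

lemma distinct_labels_child: "distinct (labels (Node cs)) \<Longrightarrow> c \<in> set cs \<Longrightarrow> distinct (labels c)"
  by (auto simp: distinct_concat_iff)

lemma disjoint_labels_children:
  "distinct (concat (map labels cs)) \<Longrightarrow> c1 \<in> set cs \<Longrightarrow> c2 \<in> set cs \<Longrightarrow> c1 \<noteq> c2
   \<Longrightarrow> set (labels c1) \<inter> set (labels c2) = {}"
  by (induction cs) auto

lemma lab_notin_labels_sibling:
  "distinct (concat (map labels cs)) \<Longrightarrow> c1 \<in> set cs \<Longrightarrow> c2 \<in> set cs \<Longrightarrow> c1 \<noteq> c2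
   \<Longrightarrow> lab c1 \<notin> set (labels c2)"
  using disjoint_labels_children[of cs c1 c2] lab_in_labels[of c1] by blast

lemma subtree_eq_if_lab_eq:
  "distinct (labels t) \<Longrightarrow> s1 \<in> subtrees t \<Longrightarrow> s2 \<in> subtrees t \<Longrightarrow> lab s1 = lab s2 \<Longrightarrow> s1 = s2"
proof (induction t arbitrary: s1 s2)
  case (Node cs)
  have d: "distinct (concat (map labels cs))"
    using Node.prems(1) by simp
  have root: "s = Node cs" if "s \<in> subtrees (Node cs)" "lab s = lab (Node cs)" for s
    using that Node.prems(1) by (auto simp: set_labels)
  show ?case
  proof (cases "s1 = Node cs \<or> s2 = Node cs")
    case True
    then show ?thesis using Node.prems root by metis
  next
    case False
    then obtain c1 c2 where c: "c1 \<in> set cs" "s1 \<in> subtrees c1" "c2 \<in> set cs" "s2 \<in> subtrees c2"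
      using Node.prems by auto
    show ?thesis
    proof (cases "c1 = c2")
      case True
      have "distinct (labels c1)"
        using distinct_labels_child[OF Node.prems(1) c(1)] .
      then show ?thesis
        using Node.IH[OF c(1)] c(2,4) True Node.prems(4) by blast
    next
      case False
      have "lab s1 \<in> set (labels c1)" "lab s2 \<in> set (labels c2)"
        using c(2,4) by (simp_all add: set_labels)
      then show ?thesis
        using disjoint_labels_children[OF d c(1,3) False] Node.prems(4) by auto
    qed
  qed
qed simp

lemma parent_eq_if_common_child:
  "distinct (labels t) \<Longrightarrow> Node cs1 \<in> subtrees t \<Longrightarrow> Node cs2 \<in> subtrees t
   \<Longrightarrow> c \<in> set cs1 \<Longrightarrow> c \<in> set cs2 \<Longrightarrow> cs1 = cs2"
proof (induction t arbitrary: cs1 cs2)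
  case (Node ds)
  have d: "distinct (concat (map labels ds))"
    using Node.prems(1) by simp
  have root: "cs' = ds"
    if sub: "Node cs' \<in> subtrees (Node ds)" and c: "c \<in> set cs'" "c \<in> set ds" for cs'
  proof (rule ccontr)
    assume "cs' \<noteq> ds"
    then obtain d' where d': "d' \<in> set ds" "Node cs' \<in> subtrees d'"
      using sub by auto
    have "c \<noteq> d'"
      using d'(2) Node_notin_subtrees_child[OF c(1)] by blast
    moreover have "lab c \<in> set (labels d')"
      using child_in_subtrees[OF c(1) d'(2)] by (simp add: set_labels)
    ultimately show False
      using lab_notin_labels_sibling[OF d c(2) d'(1)] by blast
  qed
  show ?case
  proof (cases "cs1 = ds \<or> cs2 = ds")
    case True
    then show ?thesis using root Node.prems by metis
  next
    case False
    then obtain d1 d2 where d12: "d1 \<in> set ds" "Node cs1 \<in> subtrees d1"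
      "d2 \<in> set ds" "Node cs2 \<in> subtrees d2"
      using Node.prems(2,3) by auto
    have "lab c \<in> set (labels d1)" "lab c \<in> set (labels d2)"
      using child_in_subtrees[OF Node.prems(4) d12(2)] child_in_subtrees[OF Node.prems(5) d12(4)]
      by (simp_all add: set_labels)
    then have "d1 = d2"
      using disjoint_labels_children[OF d d12(1,3)] by blast
    moreover have "distinct (labels d1)"
      using distinct_labels_child[OF Node.prems(1) d12(1)] .
    ultimately show ?thesis
      using Node.IH[OF d12(1)] d12(2,4) Node.prems(4,5) by blast
  qed
qed simp

lemma interior_Leaf [simp]: "interior (Leaf n) = {}"
  by (simp add: interior_def)

lemma interior_Node [simp]:
  "interior (Node cs) = insert (lab (Node cs)) (\<Union>c\<in>set cs. interior c)"
  by (auto simp: interior_def)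

lemma interior_subset_labels: "interior t \<subseteq> set (labels t)"
  by (induction t) auto

lemma kids_lab_Node:
  assumes "distinct (labels T)" "Node cs \<in> subtrees T"
  shows "kids T (lab (Node cs)) = cs"
  unfolding kids_def
proof (rule the_equality)
  show "Node cs \<in> subtrees T \<and> lab (Node cs) = lab (Node cs)"
    using assms(2) by simp
next
  fix cs' assume "Node cs' \<in> subtrees T \<and> lab (Node cs') = lab (Node cs)"
  then show "cs' = cs"
    using subtree_eq_if_lab_eq[OF assms(1) _ assms(2)] by blast
qed

lemma parent_rank_child:
  assumes "distinct (labels T)" "Node ps \<in> subtrees T" "c \<in> set ps"
  shows "parent_rank R T (lab c) = R (lab (Node ps))"
proof -
  have cT: "c \<in> subtrees T"
    using child_in_subtrees[OF assms(3,2)] .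
  have "lab c \<noteq> lab T"
  proof
    assume "lab c = lab T"
    then have "c = T"
      by (rule subtree_eq_if_lab_eq[OF assms(1) cT subtrees_refl])
    then show False
      using assms(2) Node_notin_subtrees_child[OF assms(3)] by simp
  qed
  moreover have "(THE p. p \<in> subtrees T \<and> (\<exists>cs. p = Node cs \<and> (\<exists>c'\<in>set cs. lab c' = lab c)))
    = Node ps"
  proof (rule the_equality)
    show "Node ps \<in> subtrees T \<and> (\<exists>cs. Node ps = Node cs \<and> (\<exists>c'\<in>set cs. lab c' = lab c))"
      using assms(2,3) by blast
  next
    fix p assume "p \<in> subtrees T \<and> (\<exists>cs. p = Node cs \<and> (\<exists>c'\<in>set cs. lab c' = lab c))"
    then obtain cs c' where p: "p = Node cs" "Node cs \<in> subtrees T" "c' \<in> set cs" "lab c' = lab c"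
      by blast
    then have "c' = c"
      using subtree_eq_if_lab_eq[OF assms(1) child_in_subtrees[OF p(3,2)] cT] by simp
    then show "p = Node ps"
      using parent_eq_if_common_child[OF assms(1) p(2) assms(2)] p(1,3) assms(3) by simp
  qed
  ultimately show ?thesis
    by (simp add: parent_rank_def)
qed

lemma tens_cong_weights:
  "\<forall>\<mu>\<in>set (labels t). W1 \<mu> = W2 \<mu> \<Longrightarrow> tens R W1 t j idx = tens R W2 t j idx"
proof (induction t arbitrary: j)
  case (Node cs)
  then show ?case by (simp cong: map_cong)
qed simp

lemma tens_eq_0_if_column_eq_0:
  "\<forall>i<rank D R c. W (lab c) i r = 0 \<Longrightarrow> (\<And>n. c = Leaf n \<Longrightarrow> idx n < D n) \<Longrightarrow> tens R W c r idx = 0"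
  by (cases c) auto

lemma tens_row_mask:
  assumes "distinct (labels (Node cs))" "r < R (lab (Node cs))"
  shows "tens R (W(lab (Node cs) := (\<lambda>i j. if i = r then W (lab (Node cs)) i j else 0))) (Node cs) j idx
    = W (lab (Node cs)) r j * prod_list (map (\<lambda>c. tens R W c r idx) cs)"
  (is "tens R ?W _ _ _ = _")
proof -
  have "tens R ?W c r' idx = tens R W c r' idx" if "c \<in> set cs" for c r'
    using assms(1) that by (intro tens_cong_weights) auto
  then show ?thesis
    using assms(2) by (simp add: if_distrib[of "\<lambda>x. x * _"] cong: map_cong if_cong)
qed

lemma tens_column_mask:
  assumes "distinct (labels t)"
  shows "tens R (W(lab t := (\<lambda>i j. if j = r then W (lab t) i j else 0))) t r' idx
    = (if r' = r then tens R W t r idx else 0)"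
  (is "tens R ?W _ _ _ = _")
proof (cases t)
  case (Node cs)
  have "tens R ?W c r'' idx = tens R W c r'' idx" if "c \<in> set cs" for c r''
    using assms that Node by (intro tens_cong_weights) auto
  then show ?thesis
    using Node by (simp cong: map_cong)
qed simp

lemma prod_list_tens_child_column_mask:
  assumes "distinct (labels (Node cs))" "c0 \<in> set cs"
  shows "prod_list (map (\<lambda>c. tens R (W(lab c0 := (\<lambda>i j. if j = r then W (lab c0) i j else 0))) c r' idx) cs)
    = (if r' = r then prod_list (map (\<lambda>c. tens R W c r idx) cs) else 0)"
  (is "prod_list (map (\<lambda>c. tens R ?W c r' idx) cs) = _")
proof -
  have d: "distinct (concat (map labels cs))"
    using assms(1) by simp
  have children: "tens R ?W c r' idx = (if c = c0 then (if r' = r then tens R W c r idx else 0)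
    else tens R W c r' idx)" if c: "c \<in> set cs" for c
  proof (cases "c = c0")
    case True
    then show ?thesis
      using tens_column_mask distinct_labels_child[OF assms(1) c] by simp
  next
    case False
    then show ?thesis
      using lab_notin_labels_sibling[OF d assms(2) c] by (auto intro: tens_cong_weights)
  qed
  show ?thesis
  proof (cases "r' = r")
    case True
    have "map (\<lambda>c. tens R ?W c r idx) cs = map (\<lambda>c. tens R W c r idx) cs"
      using children True by (intro map_cong) simp_all
    with True show ?thesis
      by (simp del: map_eq_conv)
  next
    case False
    then have "0 \<in> set (map (\<lambda>c. tens R ?W c r' idx) cs)"
      using children assms(2) by force
    then show ?thesis
      using False by (simp add: prod_list_zero_iff)
  qed
qed

lemma tens_child_column_mask:
  assumes "distinct (labels (Node cs))" "c0 \<in> set cs" "r < R (lab (Node cs))"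
  shows "tens R (W(lab c0 := (\<lambda>i j. if j = r then W (lab c0) i j else 0))) (Node cs) j idx
    = W (lab (Node cs)) r j * prod_list (map (\<lambda>c. tens R W c r idx) cs)"
  (is "tens R ?W _ _ _ = _")
proof -
  have "lab (Node cs) \<noteq> lab c0"
    using assms(1,2) lab_in_labels[of c0] by auto
  then have "tens R ?W (Node cs) j idx
    = (\<Sum>r'<R (lab (Node cs)). W (lab (Node cs)) r' j * prod_list (map (\<lambda>c. tens R ?W c r' idx) cs))"
    by simp
  also have "\<dots> = (\<Sum>r'<R (lab (Node cs)).
      W (lab (Node cs)) r' j * (if r' = r then prod_list (map (\<lambda>c. tens R W c r idx) cs) else 0))"
    by (simp only: prod_list_tens_child_column_mask[OF assms(1,2)])
  also have "\<dots> = W (lab (Node cs)) r j * prod_list (map (\<lambda>c. tens R W c r idx) cs)"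
    using assms(3) by (simp add: if_distrib[of "\<lambda>x. _ * x"] cong: if_cong)
  finally show ?thesis .
qed

lemma tens_rep_cong_weights:
  "\<forall>\<mu>\<in>set (labels t). W1 \<mu> = W2 \<mu> \<Longrightarrow> tens_rep R W1 \<nu> g t j idx = tens_rep R W2 \<nu> g t j idx"
proof (induction t arbitrary: j)
  case (Node cs)
  then show ?case by (simp cong: map_cong)
qed simp

lemma tens_rep_cong_weights_outside:
  assumes "distinct (labels t)" "Node cs \<in> subtrees t"
    and "\<forall>\<mu>. \<mu> \<notin> set (labels (Node cs)) \<longrightarrow> W1 \<mu> = W2 \<mu>"
  shows "tens_rep R W1 (lab (Node cs)) g t j idx = tens_rep R W2 (lab (Node cs)) g t j idx"
  using assms(1,2)
proof (induction t arbitrary: j)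
  case (Node ds)
  show ?case
  proof (cases "Node ds = Node cs")
    case False
    then obtain d0 where d0: "d0 \<in> set ds" "Node cs \<in> subtrees d0"
      using Node.prems(2) by auto
    have d: "distinct (concat (map labels ds))" "lab (Node ds) \<notin> set (concat (map labels ds))"
      using Node.prems(1) by simp_all
    have sub: "set (labels (Node cs)) \<subseteq> set (labels d0)"
      using d0(2) subtrees_trans by (fastforce simp: set_labels)
    have "lab (Node ds) \<noteq> lab (Node cs)"
      using False subtree_eq_if_lab_eq[OF Node.prems(1) subtrees_refl Node.prems(2)] by metis
    moreover have "W1 (lab (Node ds)) = W2 (lab (Node ds))"
    proof -
      have "lab (Node ds) \<notin> set (labels (Node cs))"
        using d(2) d0(1) sub by auto
      then show ?thesis
        using assms(3) by blast
    qed
    moreover have "tens_rep R W1 (lab (Node cs)) g c r' idx = tens_rep R W2 (lab (Node cs)) g c r' idx"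
      if c: "c \<in> set ds" for c r'
    proof (cases "c = d0")
      case True
      then show ?thesis
        using Node.IH[OF c] distinct_labels_child[OF Node.prems(1) c]
          d0(2) by blast
    next
      case False
      then have "set (labels c) \<inter> set (labels (Node cs)) = {}"
        using disjoint_labels_children[OF d(1) c d0(1)] sub by blast
      then show ?thesis
        using assms(3) by (intro tens_rep_cong_weights) blast
    qed
    ultimately show ?thesis
      by (simp cong: map_cong)
  qed simp
qed simp

lemma tens_eq_tens_rep:
  "\<forall>s\<in>subtrees t. lab s = \<nu> \<longrightarrow> s = Node cs \<Longrightarrow>
   tens R W t j idx = tens_rep R W \<nu> (tens R W (Node cs)) t j idx"
proof (induction t arbitrary: j)
  case (Node ds)
  show ?case
  proof (cases "lab (Node ds) = \<nu>")
    case True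
    then show ?thesis
      using Node.prems by simp
  next
    case False
    then show ?thesis
      using Node by (simp cong: map_cong)
  qed
qed simp

lemma prod_list_map_scale_unique:
  fixes k :: "'a::comm_monoid_mult"
  assumes "\<forall>x\<in>set xs. f x = (if P x then k * g x else g x)" and "length (filter P xs) \<le> 1"
  shows "prod_list (map f xs) =
    (if \<exists>x\<in>set xs. P x then k * prod_list (map g xs) else prod_list (map g xs))"
  using assms
proof (induction xs)
  case (Cons x xs)
  show ?case
  proof (cases "P x")
    case True
    then have "\<forall>y\<in>set xs. \<not> P y"
      using Cons.prems(2) by (simp add: filter_empty_conv)
    then show ?thesis
      using Cons.prems(1) True by (simp add: mult.assoc cong: map_cong)
  next
    case False
    then show ?thesis
      using Cons by (simp add: mult.left_commute)
  qed
qed simp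

lemma length_filter_interior_le_1:
  "distinct (concat (map labels cs)) \<Longrightarrow> length (filter (\<lambda>c. \<nu> \<in> interior c) cs) \<le> 1"
proof (induction cs)
  case (Cons c cs)
  show ?case
  proof (cases "\<nu> \<in> interior c")
    case True
    then have "\<nu> \<in> set (labels c)"
      using interior_subset_labels by blast
    then have "\<forall>c'\<in>set cs. \<nu> \<notin> set (labels c')"
      using Cons.prems by auto
    then have "\<forall>c'\<in>set cs. \<nu> \<notin> interior c'"
      using interior_subset_labels by blast
    then show ?thesis
      by (simp add: filter_empty_conv)
  next
    case False
    then show ?thesis
      using Cons by simp
  qed
qed simp

lemma tens_rep_scale:
  "distinct (labels t) \<Longrightarrow>
   tens_rep R W \<nu> (\<lambda>j idx. k * g j idx) t j idx =
   (if \<nu> \<in> interior t then k * tens_rep R W \<nu> g t j idx else tens_rep R W \<nu> g t j idx)"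
proof (induction t arbitrary: j)
  case (Node cs)
  have d: "distinct (concat (map labels cs))"
    using Node.prems by simp
  show ?case
  proof (cases "lab (Node cs) = \<nu>")
    case False
    have "prod_list (map (\<lambda>c. tens_rep R W \<nu> (\<lambda>j idx. k * g j idx) c r' idx) cs) =
      (if \<exists>c\<in>set cs. \<nu> \<in> interior c then k * prod_list (map (\<lambda>c. tens_rep R W \<nu> g c r' idx) cs)
       else prod_list (map (\<lambda>c. tens_rep R W \<nu> g c r' idx) cs))" for r'
      using Node.IH d by (intro prod_list_map_scale_unique length_filter_interior_le_1)
        (auto simp: distinct_concat_iff)
    with False show ?thesis
      by (simp add: sum_distrib_left algebra_simps)
  qed simp
qed simp

lemma tens_rep_cong_parent_indices:
  "\<forall>ps c j. Node ps \<in> subtrees t \<longrightarrow> c \<in> set ps \<longrightarrow> lab c = \<nu> \<longrightarrow> j < R (lab (Node ps))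
     \<longrightarrow> g1 j idx = g2 j idx
   \<Longrightarrow> lab t \<noteq> \<nu> \<Longrightarrow> tens_rep R W \<nu> g1 t j idx = tens_rep R W \<nu> g2 t j idx"
proof (induction t arbitrary: j)
  case (Node cs)
  have "tens_rep R W \<nu> g1 c r' idx = tens_rep R W \<nu> g2 c r' idx"
    if c: "c \<in> set cs" and r': "r' < R (lab (Node cs))" for c r'
  proof (cases "lab c = \<nu>")
    case True
    then show ?thesis
      using Node.prems(1) c r' by (cases c) auto
  next
    case False
    have "\<forall>s\<in>subtrees c. s \<in> subtrees (Node cs)"
      using c by auto
    then show ?thesis
      using Node.IH[OF c] Node.prems(1) False by blast
  qed
  then show ?case
    using Node.prems(2) by (simp cong: map_cong)
qed simp

lemma tens_rep_cong_parent_rank: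
  assumes "distinct (labels T)" "Node cs \<in> subtrees T"
    and "\<forall>j<parent_rank R T (lab (Node cs)). g1 j idx = g2 j idx"
  shows "tens_rep R W (lab (Node cs)) g1 T 0 idx = tens_rep R W (lab (Node cs)) g2 T 0 idx"
proof (cases "lab (Node cs) = lab T")
  case True
  then have "T = Node cs"
    using subtree_eq_if_lab_eq[OF assms(1) subtrees_refl assms(2)] by simp
  then show ?thesis
    using assms(3) by (simp add: parent_rank_def)
next
  case False
  show ?thesis
  proof (rule tens_rep_cong_parent_indices[OF _ False[symmetric]], intro allI impI)
    fix ps c j
    assume "Node ps \<in> subtrees T" "c \<in> set ps" "lab c = lab (Node cs)" "j < R (lab (Node ps))"
    then show "g1 j idx = g2 j idx"
      using assms(3) parent_rank_child[OF assms(1)] by metis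
  qed
qed

lemma end_tensor_eq_tens_rep:
  assumes "distinct (labels T)" "Node cs \<in> subtrees T"
    and "\<forall>\<mu>. \<mu> \<notin> set (labels (Node cs)) \<longrightarrow> W' \<mu> = W \<mu>"
  shows "end_tensor T R W' idx = tens_rep R W (lab (Node cs)) (tens R W' (Node cs)) T 0 idx"
proof -
  have "end_tensor T R W' idx = tens_rep R W' (lab (Node cs)) (tens R W' (Node cs)) T 0 idx"
    unfolding end_tensor_def
    using subtree_eq_if_lab_eq[OF assms(1) _ assms(2)] by (intro tens_eq_tens_rep) blast
  also have "\<dots> = tens_rep R W (lab (Node cs)) (tens R W' (Node cs)) T 0 idx"
    using tens_rep_cong_weights_outside[OF assms] .
  finally show ?thesis .
qed

definition local_component :: "mtree \<Rightarrow> (nat set \<Rightarrow> nat) \<Rightarrow> (nat set \<Rightarrow> nat \<Rightarrow> nat \<Rightarrow> real)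
    \<Rightarrow> nat set \<Rightarrow> nat \<Rightarrow> nat \<Rightarrow> (nat \<Rightarrow> nat) \<Rightarrow> real" where
  "local_component T R W \<nu> r =
     (\<lambda>r' idx. W \<nu> r r' * prod_list (map (\<lambda>c. tens R W c r idx) (kids T \<nu>)))"

lemma local_component_eq_0_if_sigma_eq_0:
  assumes "distinct (labels T)" "Node cs \<in> subtrees T" "\<forall>n\<in>set (leaves T). idx n < D n"
    and "sigma T D R W (lab (Node cs)) r = 0" "j < parent_rank R T (lab (Node cs))"
  shows "local_component T R W (lab (Node cs)) r j idx = 0"
proof -
  let ?\<nu> = "lab (Node cs)"
  have kids: "kids T ?\<nu> = cs"
    using kids_lab_Node[OF assms(1,2)] .
  have "(\<Sum>j<parent_rank R T ?\<nu>. (W ?\<nu> r j)\<^sup>2) = 0 \<or>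
    (\<exists>c\<in>set cs. (\<Sum>i<rank D R c. (W (lab c) i r)\<^sup>2) = 0)"
    using assms(4) kids by (auto simp: sigma_def prod_list_zero_iff)
  then show ?thesis
  proof
    assume "(\<Sum>j<parent_rank R T ?\<nu>. (W ?\<nu> r j)\<^sup>2) = 0"
    then have "W ?\<nu> r j = 0"
      using assms(5) by (simp add: sum_nonneg_eq_0_iff)
    then show ?thesis
      by (simp add: local_component_def)
  next
    assume "\<exists>c\<in>set cs. (\<Sum>i<rank D R c. (W (lab c) i r)\<^sup>2) = 0"
    then obtain c where c: "c \<in> set cs" "\<forall>i<rank D R c. W (lab c) i r = 0"
      by (auto simp: sum_nonneg_eq_0_iff)
    have "idx n < D n" if "c = Leaf n" for n
      using assms(3) leaf_in_leaves child_in_subtrees[OF c(1) assms(2)] that by blast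
    then have "tens R W c r idx = 0"
      using tens_eq_0_if_column_eq_0 c(2) by blast
    then show ?thesis
      using c(1) kids by (auto simp: local_component_def prod_list_zero_iff)
  qed
qed

lemma sigma_mult_local_comp:
  assumes "distinct (labels T)" "Node cs \<in> subtrees T" "\<forall>n\<in>set (leaves T). idx n < D n"
  shows "sigma T D R W (lab (Node cs)) r * local_comp T D R W (lab (Node cs)) r idx =
    tens_rep R W (lab (Node cs)) (local_component T R W (lab (Node cs)) r) T 0 idx"
proof -
  let ?\<nu> = "lab (Node cs)" and ?\<sigma> = "sigma T D R W (lab (Node cs)) r"
  have interior: "?\<nu> \<in> interior T"
    using assms(2) by (auto simp: interior_def)
  show ?thesis
  proof (cases "?\<sigma> = 0")
    case True
    have "tens_rep R W ?\<nu> (local_component T R W ?\<nu> r) T 0 idx =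
      tens_rep R W ?\<nu> (\<lambda>j idx. 0 * local_component T R W ?\<nu> r j idx) T 0 idx"
      using local_component_eq_0_if_sigma_eq_0[OF assms True]
      by (intro tens_rep_cong_parent_rank[OF assms(1,2)]) simp
    also have "\<dots> = 0"
      by (subst tens_rep_scale[OF assms(1)]) (simp add: interior)
    finally show ?thesis
      using True by simp
  next
    case False
    have "local_comp T D R W ?\<nu> r idx =
      tens_rep R W ?\<nu> (\<lambda>j idx. (1 / ?\<sigma>) * local_component T R W ?\<nu> r j idx) T 0 idx"
      using False by (simp add: local_comp_def local_component_def mult.assoc)
    also have "\<dots> = (1 / ?\<sigma>) * tens_rep R W ?\<nu> (local_component T R W ?\<nu> r) T 0 idx"
      by (subst tens_rep_scale[OF assms(1)]) (simp add: interior)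
    finally show ?thesis
      using False by simp
  qed
qed

lemma end_tensor_row_mask:
  assumes "distinct (labels T)" "Node cs \<in> subtrees T" "r < R (lab (Node cs))"
  shows "end_tensor T R (W(lab (Node cs) := (\<lambda>i j. if i = r then W (lab (Node cs)) i j else 0))) idx
    = tens_rep R W (lab (Node cs)) (local_component T R W (lab (Node cs)) r) T 0 idx"
  (is "end_tensor T R ?W idx = _")
proof -
  have "end_tensor T R ?W idx = tens_rep R W (lab (Node cs)) (tens R ?W (Node cs)) T 0 idx"
    by (rule end_tensor_eq_tens_rep[OF assms(1,2)]) simp
  also have "tens R ?W (Node cs) = local_component T R W (lab (Node cs)) r"
    unfolding local_component_def kids_lab_Node[OF assms(1,2)]
    by (intro ext) (rule tens_row_mask[where R = R, OF distinct_labels_subtree[OF assms(1,2)] assms(3)])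
  finally show ?thesis .
qed

lemma end_tensor_child_column_mask:
  assumes "distinct (labels T)" "Node cs \<in> subtrees T" "c0 \<in> set cs" "r < R (lab (Node cs))"
  shows "end_tensor T R (W(lab c0 := (\<lambda>i j. if j = r then W (lab c0) i j else 0))) idx
    = tens_rep R W (lab (Node cs)) (local_component T R W (lab (Node cs)) r) T 0 idx"
  (is "end_tensor T R ?W idx = _")
proof -
  have "lab c0 \<in> set (labels (Node cs))"
    unfolding set_labels using child_in_subtrees_Node[OF assms(3)] by (rule imageI)
  then have "end_tensor T R ?W idx = tens_rep R W (lab (Node cs)) (tens R ?W (Node cs)) T 0 idx"
    by (intro end_tensor_eq_tens_rep[OF assms(1,2)]) auto
  also have "tens R ?W (Node cs) = local_component T R W (lab (Node cs)) r"
    unfolding local_component_def kids_lab_Node[OF assms(1,2)]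
    by (intro ext)
      (rule tens_child_column_mask[where R = R, OF distinct_labels_subtree[OF assms(1,2)] assms(3,4)])
  finally show ?thesis .
qed

theorem lemma12:
  fixes N :: nat and D :: "nat \<Rightarrow> nat" and T :: mtree
    and R :: "nat set \<Rightarrow> nat" and W :: "nat set \<Rightarrow> nat \<Rightarrow> nat \<Rightarrow> real"
    and \<nu> \<nu>c :: "nat set" and r :: nat
  assumes "mode_tree N T"
    and "\<forall>n\<in>{1..N}. D n > 0"
    and "\<forall>\<mu>\<in>interior T. R \<mu> > 0"
    and "\<nu> \<in> interior T"
    and "\<nu>c \<in> lab ` set (kids T \<nu>)"
    and "r < R \<nu>"
  shows "(\<forall>idx. (\<forall>n\<in>{1..N}. idx n < D n) \<longrightarrow>
            end_tensor T R (W(\<nu> := (\<lambda>i j. if i = r then W \<nu> i j else 0))) idx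
              = sigma T D R W \<nu> r * local_comp T D R W \<nu> r idx)
       \<and> (\<forall>idx. (\<forall>n\<in>{1..N}. idx n < D n) \<longrightarrow>
            end_tensor T R (W(\<nu>c := (\<lambda>i j. if j = r then W \<nu>c i j else 0))) idx
              = sigma T D R W \<nu> r * local_comp T D R W \<nu> r idx)"
proof -
  have dT: "distinct (labels T)" and leaves: "set (leaves T) = {1..N}"
    using assms(1) by (auto simp: mode_tree_def)
  obtain cs where node: "Node cs \<in> subtrees T" and \<nu>: "\<nu> = lab (Node cs)"
    using assms(4) by (auto simp: interior_def)
  obtain c0 where c0: "c0 \<in> set cs" "\<nu>c = lab c0"
    using assms(5) kids_lab_Node[OF dT node] \<nu> by auto
  have r: "r < R (lab (Node cs))"
    using assms(6) \<nu> by simp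
  show ?thesis
    unfolding \<nu> c0(2)
    using sigma_mult_local_comp[OF dT node] leaves
      end_tensor_row_mask[where R = R, OF dT node r]
      end_tensor_child_column_mask[where R = R, OF dT node c0(1) r]
    by simp
qed

end
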